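(* Let $G=G_1\vee G_2$ be the join of two cographs $G_1,G_2$ (so $G$ is a connected cograph with at least two vertices). Define $D^*=\{w\}$ if there is a vertex $w\in V(G)$ with $N[w]=V(G)$ (choose one such $w$), and otherwise $D^*=\{x,y\}$ for an arbitrary choice of $x\in V(G_1)$ and $y\in V(G_2)$. Then $D^*$ is a minimum dominating set of $G$, and for every dominating set $D$ of $G$ we have $D\leftrightarrow_{|D|+1} D^*$.
   Context: All graphs are finite, simple and undirected. The join $G_1\vee G_2$ of vertex-disjoint graphs has vertex set $V(G_1)\cup V(G_2)$ and edge set $E(G_1)\cup E(G_2)\cup\{vw: v\in V(G_1), w\in V(G_2)\}$. Cographs are defined recursively: a single vertex is a cograph, and the disjoint union and the join of two cographs are cographs. $N[w]$ denotes the closed neighbourhood of $w$. A set $D\subseteq V(G)$ is a dominating set if every vertex of $G$ is in $D$ or adjacent to a vertex of $D$. Two dominating sets $D,D'$ are adjacent if $|D\triangle D'|=1$. For dominating sets $D_p,D_q$ and an integer $k>0$, write $D_p\leftrightarrow_k D_q$ if there is a sequence $D_0=D_p,\dots,D_\ell=D_q$ ($\ell\ge0$) of dominating sets of $G$ with consecutive sets adjacent and $|D_i|\le k$ for all $i$. *)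

theory Defs
  imports Main
begin

text \<open>A finite simple undirected graph is given by a vertex set V and a set E of
  edges, each edge being a two-element set of vertices.\<close>

definition join_edges :: "'a set \<Rightarrow> 'a set set \<Rightarrow> 'a set \<Rightarrow> 'a set set \<Rightarrow> 'a set set" where
  "join_edges V1 E1 V2 E2 = E1 \<union> E2 \<union> {{v, w} | v w. v \<in> V1 \<and> w \<in> V2}"

inductive cograph :: "'a set \<Rightarrow> 'a set set \<Rightarrow> bool" where
  single: "cograph {v} {}"
| disj_union: "\<lbrakk>cograph V1 E1; cograph V2 E2; V1 \<inter> V2 = {}\<rbrakk>
      \<Longrightarrow> cograph (V1 \<union> V2) (E1 \<union> E2)"
| join: "\<lbrakk>cograph V1 E1; cograph V2 E2; V1 \<inter> V2 = {}\<rbrakk>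
      \<Longrightarrow> cograph (V1 \<union> V2) (join_edges V1 E1 V2 E2)"

definition closed_nbhd :: "'a set \<Rightarrow> 'a set set \<Rightarrow> 'a \<Rightarrow> 'a set" where
  "closed_nbhd V E w = {w} \<union> {u \<in> V. {u, w} \<in> E}"

definition dominating :: "'a set \<Rightarrow> 'a set set \<Rightarrow> 'a set \<Rightarrow> bool" where
  "dominating V E D \<longleftrightarrow> D \<subseteq> V \<and> (\<forall>v \<in> V. v \<in> D \<or> (\<exists>u \<in> D. {u, v} \<in> E))"

definition min_dominating :: "'a set \<Rightarrow> 'a set set \<Rightarrow> 'a set \<Rightarrow> bool" where
  "min_dominating V E D \<longleftrightarrow> dominating V E D \<and>
     (\<forall>D'. dominating V E D' \<longrightarrow> card D \<le> card D')"

definition ds_adjacent :: "'a set \<Rightarrow> 'a set \<Rightarrow> bool" where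
  "ds_adjacent D D' \<longleftrightarrow> card ((D - D') \<union> (D' - D)) = 1"

definition reconf :: "'a set \<Rightarrow> 'a set set \<Rightarrow> nat \<Rightarrow> 'a set \<Rightarrow> 'a set \<Rightarrow> bool" where
  "reconf V E k D D' \<longleftrightarrow> (\<exists>Ds. Ds \<noteq> [] \<and> hd Ds = D \<and> last Ds = D' \<and>
     (\<forall>X \<in> set Ds. dominating V E X \<and> card X \<le> k) \<and>
     (\<forall>i. Suc i < length Ds \<longrightarrow> ds_adjacent (Ds ! i) (Ds ! Suc i)))"

end

theory Submission
  imports Defs
begin

text \<open>Any two dominating sets A, B are connected through their union: add the elements of
  B one at a time (every intermediate set contains A, so it dominates), then remove the elements
  of A not in B (every intermediate set contains B). All sizes stay at most |A \<union> B|.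
  In the join G1 \<or> G2 every pair a \<in> V(G1), b \<in> V(G2) dominates. Given a dominating set D
  and some a \<in> D, pick b \<in> {x, y} on the other side of a: then D reaches {a, b} through
  D \<union> {b}, and {a, b} reaches {x, y} through {a, x, y}, of size 3 \<le> |D| + 1 because without
  a universal vertex |D| \<ge> 2. With a universal vertex w, D reaches {w} through D \<union> {w}.\<close>

lemma reconf_iff_successively:
  "reconf V E k D D' \<longleftrightarrow> (\<exists>Ds. Ds \<noteq> [] \<and> hd Ds = D \<and> last Ds = D' \<and>
     (\<forall>X \<in> set Ds. dominating V E X \<and> card X \<le> k) \<and> successively ds_adjacent Ds)"
  unfolding reconf_def successively_conv_nth ..

lemma ds_adjacent_sym: "ds_adjacent D D' \<longleftrightarrow> ds_adjacent D' D"
  by (simp add: ds_adjacent_def Un_commute)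

lemma ds_adjacent_insert: "x \<notin> D \<Longrightarrow> ds_adjacent D (insert x D)"
proof -
  assume "x \<notin> D"
  then have "(D - insert x D) \<union> (insert x D - D) = {x}" by blast
  then show ?thesis unfolding ds_adjacent_def by simp
qed

lemma reconf_refl: "dominating V E X \<Longrightarrow> card X \<le> k \<Longrightarrow> reconf V E k X X"
  unfolding reconf_iff_successively by (intro exI[of _ "[X]"]) auto

lemma reconf_adjacent:
  "\<lbrakk>dominating V E X; card X \<le> k; dominating V E Y; card Y \<le> k; ds_adjacent X Y\<rbrakk>
    \<Longrightarrow> reconf V E k X Y"
  unfolding reconf_iff_successively by (intro exI[of _ "[X, Y]"]) auto

lemma reconf_sym: "reconf V E k X Y \<Longrightarrow> reconf V E k Y X"
proof -
  assume "reconf V E k X Y"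
  then obtain Ds where "Ds \<noteq> []" "hd Ds = X" "last Ds = Y"
    "\<forall>S \<in> set Ds. dominating V E S \<and> card S \<le> k" "successively ds_adjacent Ds"
    unfolding reconf_iff_successively by blast
  then show ?thesis
    unfolding reconf_iff_successively
    by (intro exI[of _ "rev Ds"]) (simp add: hd_rev last_rev ds_adjacent_sym)
qed

lemma reconf_trans:
  assumes "reconf V E k X Y" and "reconf V E k Y Z"
  shows "reconf V E k X Z"
proof -
  obtain Xs where Xs: "Xs \<noteq> []" "hd Xs = X" "last Xs = Y"
    "\<forall>S \<in> set Xs. dominating V E S \<and> card S \<le> k" "successively ds_adjacent Xs"
    using assms(1) unfolding reconf_iff_successively by blast
  obtain Ys where Ys: "Y # Ys \<noteq> []" "last (Y # Ys) = Z"
    "\<forall>S \<in> set (Y # Ys). dominating V E S \<and> card S \<le> k" "successively ds_adjacent (Y # Ys)"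
    using assms(2) unfolding reconf_iff_successively by (metis list.collapse)
  have "successively ds_adjacent (Xs @ Ys)"
    using Xs(3,5) Ys(4) by (auto simp: successively_append_iff successively_Cons)
  moreover have "last (Xs @ Ys) = Z"
    using Xs(3) Ys(2) by (cases "Ys = []") auto
  ultimately show ?thesis
    unfolding reconf_iff_successively using Xs Ys(3) by (intro exI[of _ "Xs @ Ys"]) auto
qed

lemma dominating_superset:
  "\<lbrakk>dominating V E D; D \<subseteq> S; S \<subseteq> V\<rbrakk> \<Longrightarrow> dominating V E S"
  unfolding dominating_def by blast

lemma dominating_singleton_iff:
  "dominating V E {w} \<longleftrightarrow> w \<in> V \<and> closed_nbhd V E w = V"
  unfolding dominating_def closed_nbhd_def by (auto simp: insert_commute)

lemma card_dominating_pos: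
  assumes "finite V" "V \<noteq> {}" "dominating V E D"
  shows "0 < card D"
  using assms finite_subset unfolding dominating_def by fastforce

lemma card_dominating_ge_2:
  assumes "finite V" "V \<noteq> {}" "dominating V E D"
    and "\<nexists>w. w \<in> V \<and> closed_nbhd V E w = V"
  shows "2 \<le> card D"
proof (rule ccontr)
  assume "\<not> 2 \<le> card D"
  then have "card D = 1" using card_dominating_pos[OF assms(1-3)] by linarith
  then obtain w where "D = {w}" by (rule card_1_singletonE)
  then show False using assms(3,4) by (auto simp: dominating_singleton_iff)
qed

lemma reconf_superset:
  assumes "dominating V E A" "A \<subseteq> S" "S \<subseteq> V" "finite S" "card S \<le> k"
  shows "reconf V E k A S"
proof -
  have step_ok: "dominating V E T \<and> card T \<le> k" if "A \<subseteq> T" "T \<subseteq> S" for T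
    using dominating_superset[OF assms(1) that(1)] that assms(3-5) card_mono[of S T] by auto
  have "reconf V E k A (A \<union> F)" if "F \<subseteq> S" for F
    using finite_subset[OF that assms(4)] that
  proof (induction F rule: finite_induct)
    case empty
    then show ?case using step_ok[of A] assms(2) by (simp add: reconf_refl)
  next
    case (insert x F)
    then have IH: "reconf V E k A (A \<union> F)" by simp
    show ?case
    proof (cases "x \<in> A")
      case True
      then show ?thesis using IH by (simp add: insert_absorb)
    next
      case False
      then have "ds_adjacent (A \<union> F) (insert x (A \<union> F))"
        using insert.hyps(2) by (simp add: ds_adjacent_insert)
      then have "reconf V E k (A \<union> F) (insert x (A \<union> F))"
        using step_ok[of "A \<union> F"] step_ok[of "insert x (A \<union> F)"] insert.prems assms(2)
        by (intro reconf_adjacent) auto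
      then show ?thesis using reconf_trans[OF IH] by simp
    qed
  qed
  then show ?thesis using assms(2) by (metis Un_absorb1 order_refl)
qed

lemma reconf_via_union:
  assumes "dominating V E A" "dominating V E B" "finite (A \<union> B)" "card (A \<union> B) \<le> k"
  shows "reconf V E k A B"
proof -
  have "A \<union> B \<subseteq> V" using assms(1,2) unfolding dominating_def by blast
  then show ?thesis
    using assms reconf_superset[of V E A "A \<union> B" k] reconf_superset[of V E B "A \<union> B" k]
    by (meson reconf_sym reconf_trans sup_ge1 sup_ge2)
qed

lemma reconf_to_universal:
  assumes "finite V" "dominating V E D" "w \<in> V" "closed_nbhd V E w = V"
  shows "reconf V E (card D + 1) D {w}"
proof -
  have "finite D" using assms(1,2) finite_subset unfolding dominating_def by blast
  then show ?thesis
    using assms by (intro reconf_via_union) (auto simp: dominating_singleton_iff card_insert_if)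
qed

lemma cograph_finite_nonempty: "cograph V E \<Longrightarrow> finite V \<and> V \<noteq> {}"
  by (induction rule: cograph.induct) auto

lemma join_dominating_pair:
  "\<lbrakk>a \<in> V1; b \<in> V2\<rbrakk> \<Longrightarrow> dominating (V1 \<union> V2) (join_edges V1 E1 V2 E2) {a, b}"
  unfolding dominating_def join_edges_def by blast

lemma join_reconf_to_pair:
  assumes "x \<in> V1" "y \<in> V2" and D: "dominating (V1 \<union> V2) (join_edges V1 E1 V2 E2) D"
    and "finite D" "2 \<le> card D"
  shows "reconf (V1 \<union> V2) (join_edges V1 E1 V2 E2) (card D + 1) D {x, y}"
proof -
  obtain a where a: "a \<in> D" using assms(5) by fastforce
  then have "a \<in> V1 \<union> V2" using D unfolding dominating_def by blast
  then obtain b where b: "b \<in> {x, y}"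
    and ab: "dominating (V1 \<union> V2) (join_edges V1 E1 V2 E2) {a, b}"
    using join_dominating_pair assms(1,2) by (metis UnE insert_commute insertCI)
  have D_ab: "reconf (V1 \<union> V2) (join_edges V1 E1 V2 E2) (card D + 1) D {a, b}"
    using D ab a assms(4) by (intro reconf_via_union) (auto simp: card_insert_if insert_absorb)
  have "{a, b} \<union> {x, y} = {a, x, y}" using b by blast
  moreover have "card {a, x, y} \<le> 3" by (simp add: card_insert_if)
  ultimately have "reconf (V1 \<union> V2) (join_edges V1 E1 V2 E2) (card D + 1) {a, b} {x, y}"
    using ab join_dominating_pair[OF assms(1,2)] assms(5) by (intro reconf_via_union) auto
  with D_ab show ?thesis by (rule reconf_trans)
qed

theorem lemma6:
  fixes V1 V2 :: "'a set" and E1 E2 :: "'a set set"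
  assumes "cograph V1 E1" and "cograph V2 E2" and "V1 \<inter> V2 = {}"
  defines "V \<equiv> V1 \<union> V2" and "E \<equiv> join_edges V1 E1 V2 E2"
  shows "(\<forall>w \<in> V. closed_nbhd V E w = V \<longrightarrow>
            min_dominating V E {w} \<and>
            (\<forall>D. dominating V E D \<longrightarrow> reconf V E (card D + 1) D {w}))
       \<and> ((\<nexists>w. w \<in> V \<and> closed_nbhd V E w = V) \<longrightarrow>
            (\<forall>x \<in> V1. \<forall>y \<in> V2.
               min_dominating V E {x, y} \<and>
               (\<forall>D. dominating V E D \<longrightarrow> reconf V E (card D + 1) D {x, y})))"
proof -
  have V: "finite V" "V \<noteq> {}"
    using cograph_finite_nonempty[OF assms(1)] cograph_finite_nonempty[OF assms(2)]
    unfolding V_def by auto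
  have finite_dom: "finite D" if "dominating V E D" for D
    using that V(1) finite_subset unfolding dominating_def by blast
  have universal: "min_dominating V E {w} \<and>
      (\<forall>D. dominating V E D \<longrightarrow> reconf V E (card D + 1) D {w})"
    if "w \<in> V" "closed_nbhd V E w = V" for w
    using that card_dominating_pos[OF V] reconf_to_universal[OF V(1)]
    by (auto simp: min_dominating_def dominating_singleton_iff Suc_le_eq)
  have pair: "min_dominating V E {x, y} \<and>
      (\<forall>D. dominating V E D \<longrightarrow> reconf V E (card D + 1) D {x, y})"
    if "\<nexists>w. w \<in> V \<and> closed_nbhd V E w = V" "x \<in> V1" "y \<in> V2" for x y
  proof -
    have "x \<noteq> y" using that(2,3) assms(3) by blast
    then have "card {x, y} = 2" by simp
    moreover have "dominating V E {x, y}"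
      unfolding V_def E_def using that(2,3) by (rule join_dominating_pair)
    ultimately show ?thesis
      using card_dominating_ge_2[OF V _ that(1)] finite_dom join_reconf_to_pair[OF that(2,3)]
      unfolding min_dominating_def V_def E_def by auto
  qed
  show ?thesis using universal pair by blast
qed

end
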